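(* For each $n\in\mathbb{N}_0$ and $m=1,\ldots,n+1$ (with products taken in $\mathbb{H}$), \begin{align*} \mathbf{X}^{0,\dagger}_n&=\tfrac{1}{n+2}\big(\mathbf{X}^{1,\dagger}_n\mathbf{e}_1+\mathbf{Y}^{1,\dagger}_n\mathbf{e}_2\big),\\ \mathbf{X}^{m,\dagger}_n&=-\tfrac{n+m+1}{2}\big(\mathbf{X}^{m-1,\dagger}_n\mathbf{e}_1-\mathbf{Y}^{m-1,\dagger}_n\mathbf{e}_2\big)+\tfrac{1}{2(n+m+2)}\big(\mathbf{X}^{m+1,\dagger}_n\mathbf{e}_1+\mathbf{Y}^{m+1,\dagger}_n\mathbf{e}_2\big),\\ \mathbf{Y}^{m,\dagger}_n&=-\tfrac{n+m+1}{2}\big(\mathbf{Y}^{m-1,\dagger}_n\mathbf{e}_1+\mathbf{X}^{m-1,\dagger}_n\mathbf{e}_2\big)+\tfrac{1}{2(n+m+2)}\big(\mathbf{Y}^{m+1,\dagger}_n\mathbf{e}_1-\mathbf{X}^{m+1,\dagger}_n\mathbf{e}_2\big), \end{align*} where $\mathbf{X}^{m,\dagger}_n=\mathbf{Y}^{m,\dagger}_n:=0$ for $m\ge n+2$ and $\mathbf{Y}^{0,\dagger}_n:=0$; moreover $\mathbf{X}^{0,\dagger}_0=\tfrac12=\mathbf{X}^{1,\dagger}_0\mathbf{e}_1=\mathbf{Y}^{1,\dagger}_0\mathbf{e}_2$.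
   Context: Quaternions $\mathbb{H}$ have basis $1,\mathbf{e}_1,\mathbf{e}_2,\mathbf{e}_3$ with $\mathbf{e}_i^2=-1$, $\mathbf{e}_1\mathbf{e}_2=\mathbf{e}_3=-\mathbf{e}_2\mathbf{e}_1$, $\mathbf{e}_2\mathbf{e}_3=\mathbf{e}_1=-\mathbf{e}_3\mathbf{e}_2$, $\mathbf{e}_3\mathbf{e}_1=\mathbf{e}_2=-\mathbf{e}_1\mathbf{e}_3$. Reduced quaternions: $\mathcal{A}=\mathrm{span}_\mathbb{R}\{1,\mathbf{e}_1,\mathbf{e}_2\}$; $x=(x_0,x_1,x_2)\in\mathbb{R}^3$ is identified with $x_0+x_1\mathbf{e}_1+x_2\mathbf{e}_2$. $\overline{D}=\partial_{x_0}-\mathbf{e}_1\partial_{x_1}-\mathbf{e}_2\partial_{x_2}$. Spherical coordinates: $x_0=r\cos\theta_1$, $x_1=r\sin\theta_1\cos\theta_2$, $x_2=r\sin\theta_1\sin\theta_2$. $P^m_n(t)=(1-t^2)^{m/2}\frac{d^m}{dt^m}P_n(t)$ is the associated Legendre function ($P_n$ the Legendre polynomial), $T_k,U_k$ the Chebyshev polynomials of first and second kind. Spherical harmonics: $U^l_{n}=P^l_{n}(\cos\theta_1)T_l(\cos\theta_2)$, $V^m_{n}=P^m_{n}(\cos\theta_1)\sin\theta_2\,U_{m-1}(\cos\theta_2)$. Basis polynomials: $\mathbf{X}^{l,\dagger}_n:=\tfrac12\overline{D}\big(r^{n+1}U^l_{n+1}\big)$, $l=0,\ldots,n+1$, and $\mathbf{Y}^{m,\dagger}_n:=\tfrac12\overline{D}\big(r^{n+1}V^m_{n+1}\big)$,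 $m=1,\ldots,n+1$. *)

theory Defs
  imports "HOL-Analysis.Analysis" "HOL-Computational_Algebra.Polynomial"
begin

datatype quat = Quat (qre: real) (qi1: real) (qi2: real) (qi3: real)

instantiation quat :: "{zero, one, plus, minus, uminus, times}"
begin
definition "0 = Quat 0 0 0 0"
definition "1 = Quat 1 0 0 0"
definition "p + q = Quat (qre p + qre q) (qi1 p + qi1 q) (qi2 p + qi2 q) (qi3 p + qi3 q)"
definition "p - q = Quat (qre p - qre q) (qi1 p - qi1 q) (qi2 p - qi2 q) (qi3 p - qi3 q)"
definition "- p = Quat (- qre p) (- qi1 p) (- qi2 p) (- qi3 p)"
definition "p * q = Quat
   (qre p * qre q - qi1 p * qi1 q - qi2 p * qi2 q - qi3 p * qi3 q)
   (qre p * qi1 q + qi1 p * qre q + qi2 p * qi3 q - qi3 p * qi2 q)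
   (qre p * qi2 q - qi1 p * qi3 q + qi2 p * qre q + qi3 p * qi1 q)
   (qre p * qi3 q + qi1 p * qi2 q - qi2 p * qi1 q + qi3 p * qre q)"
instance ..
end

definition qreal :: "real \<Rightarrow> quat" where "qreal c = Quat c 0 0 0"
definition e1 :: quat where "e1 = Quat 0 1 0 0"
definition e2 :: quat where "e2 = Quat 0 0 1 0"

definition legendre :: "nat \<Rightarrow> real poly" where
  "legendre n = smult (1 / (2 ^ n * fact n)) ((pderiv ^^ n) ([:-1, 0, 1:] ^ n))"

definition assoc_legendre :: "nat \<Rightarrow> nat \<Rightarrow> real \<Rightarrow> real" where
  "assoc_legendre m n t = sqrt (1 - t\<^sup>2) ^ m * poly ((pderiv ^^ m) (legendre n)) t"

fun chebT :: "nat \<Rightarrow> real \<Rightarrow> real" where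
  "chebT 0 t = 1"
| "chebT (Suc 0) t = t"
| "chebT (Suc (Suc k)) t = 2 * t * chebT (Suc k) t - chebT k t"

fun chebU :: "nat \<Rightarrow> real \<Rightarrow> real" where
  "chebU 0 t = 1"
| "chebU (Suc 0) t = 2 * t"
| "chebU (Suc (Suc k)) t = 2 * t * chebU (Suc k) t - chebU k t"

section \<open>Spherical coordinates on R^3 = span{1,e1,e2}\<close>

type_synonym pt = "real \<times> real \<times> real"

definition sph_r :: "pt \<Rightarrow> real" where
  "sph_r x = (case x of (x0, x1, x2) \<Rightarrow> sqrt (x0\<^sup>2 + x1\<^sup>2 + x2\<^sup>2))"
definition sph_rho :: "pt \<Rightarrow> real" where
  "sph_rho x = (case x of (x0, x1, x2) \<Rightarrow> sqrt (x1\<^sup>2 + x2\<^sup>2))"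
definition cos_th1 :: "pt \<Rightarrow> real" where
  "cos_th1 x = (case x of (x0, x1, x2) \<Rightarrow> x0 / sph_r x)"
definition cos_th2 :: "pt \<Rightarrow> real" where
  "cos_th2 x = (case x of (x0, x1, x2) \<Rightarrow> x1 / sph_rho x)"
definition sin_th2 :: "pt \<Rightarrow> real" where
  "sin_th2 x = (case x of (x0, x1, x2) \<Rightarrow> x2 / sph_rho x)"

definition harmU :: "nat \<Rightarrow> nat \<Rightarrow> pt \<Rightarrow> real" where
  "harmU l n x = assoc_legendre l n (cos_th1 x) * chebT l (cos_th2 x)"
definition harmV :: "nat \<Rightarrow> nat \<Rightarrow> pt \<Rightarrow> real" where
  "harmV m n x = assoc_legendre m n (cos_th1 x) * sin_th2 x * chebU (m - 1) (cos_th2 x)"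

definition pd0 :: "(pt \<Rightarrow> real) \<Rightarrow> pt \<Rightarrow> real" where
  "pd0 f x = (case x of (x0, x1, x2) \<Rightarrow> deriv (\<lambda>t. f (t, x1, x2)) x0)"
definition pd1 :: "(pt \<Rightarrow> real) \<Rightarrow> pt \<Rightarrow> real" where
  "pd1 f x = (case x of (x0, x1, x2) \<Rightarrow> deriv (\<lambda>t. f (x0, t, x2)) x1)"
definition pd2 :: "(pt \<Rightarrow> real) \<Rightarrow> pt \<Rightarrow> real" where
  "pd2 f x = (case x of (x0, x1, x2) \<Rightarrow> deriv (\<lambda>t. f (x0, x1, t)) x2)"

definition Dbar :: "(pt \<Rightarrow> real) \<Rightarrow> pt \<Rightarrow> quat" where
  "Dbar f x = qreal (pd0 f x) - e1 * qreal (pd1 f x) - e2 * qreal (pd2 f x)"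

definition Xdag :: "nat \<Rightarrow> nat \<Rightarrow> pt \<Rightarrow> quat" where
  "Xdag l n x = qreal (1/2) * Dbar (\<lambda>y. sph_r y ^ (n + 1) * harmU l (n + 1) y) x"
definition Ydag :: "nat \<Rightarrow> nat \<Rightarrow> pt \<Rightarrow> quat" where
  "Ydag m n x = qreal (1/2) * Dbar (\<lambda>y. sph_r y ^ (n + 1) * harmV m (n + 1) y) x"

definition Xc :: "nat \<Rightarrow> nat \<Rightarrow> pt \<Rightarrow> quat" where
  "Xc l n x = (if l \<le> n + 1 then Xdag l n x else 0)"
definition Yc :: "nat \<Rightarrow> nat \<Rightarrow> pt \<Rightarrow> quat" where
  "Yc m n x = (if 1 \<le> m \<and> m \<le> n + 1 then Ydag m n x else 0)"

end

theory Submission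
  imports Defs
begin

text \<open>
  Put N = n + 1 and W_l = r^(N-l) P_N^(l)(x0/r). Then r^N U^l_N and r^N V^l_N are W_l times the
  real and imaginary parts of (x1 + i x2)^l, so X^l and Y^l are explicit in W_l, its
  x0-derivative and its radial derivative. The associated Legendre equation gives two ladder
  identities between these quantities at consecutive levels, which combine into the single
  quaternionic relation X^(l+1) + Y^(l+1) e3 = -(n + l + 2) (X^l - Y^l e3) e1. Both recurrences
  (and the one for X^0, where Y^0 = 0) are linear consequences of this relation at two
  consecutive levels.
\<close>


section \<open>Derivatives of Legendre polynomials\<close>

definition rodrigues_deriv :: "nat \<Rightarrow> nat \<Rightarrow> real \<Rightarrow> real" where
  "rodrigues_deriv N j t = poly ((pderiv ^^ j) ([:-1, 0, 1:] ^ N)) t"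

definition legendre_deriv :: "nat \<Rightarrow> nat \<Rightarrow> real \<Rightarrow> real" where
  "legendre_deriv N l t = poly ((pderiv ^^ l) (legendre N)) t"

lemma rodrigues_pderiv:
  "[:-1, 0, 1:] * pderiv ([:-1, 0, 1:] ^ N) = smult (2 * real N) ([:0, 1:] * [:-1, 0, 1:] ^ N)"
proof (cases N)
  case (Suc M)
  have "pderiv [:-1, 0, 1 :: real:] = [:0, 2:]"
    by (simp add: pderiv_pCons)
  then show ?thesis
    unfolding Suc pderiv_power_Suc by (simp add: algebra_simps)
qed simp

lemma DERIV_rodrigues_deriv:
  "((\<lambda>t. rodrigues_deriv N j t) has_real_derivative rodrigues_deriv N (Suc j) t) (at t)"
  unfolding rodrigues_deriv_def by simp

lemma vanishing_DERIV_eq_0: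
  assumes "\<And>t. f t = (0 :: real)" and "(f has_real_derivative D) (at x)"
  shows "D = 0"
proof -
  have "f = (\<lambda>_. 0)"
    using assms(1) by auto
  then have "(f has_real_derivative 0) (at x)"
    by simp
  then show ?thesis
    using assms(2) DERIV_unique by blast
qed

text \<open>Differentiating \<open>(t\<^sup>2 - 1) u' = 2 N t u\<close> for \<open>u = (t\<^sup>2 - 1)\<^sup>N\<close> with Leibniz' rule.\<close>
lemma rodrigues_deriv_ode:
  "(t\<^sup>2 - 1) * rodrigues_deriv N (k + 2) t + 2 * (real k + 1 - real N) * t * rodrigues_deriv N (k + 1) t
     + (real k + 1) * (real k - 2 * real N) * rodrigues_deriv N k t = 0"
proof (induction k arbitrary: t)
  case 0
  have ode: "(t\<^sup>2 - 1) * rodrigues_deriv N 1 t - 2 * real N * t * rodrigues_deriv N 0 t = 0" for t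
    using arg_cong[OF rodrigues_pderiv, of "\<lambda>p. poly p t" N]
    by (simp add: rodrigues_deriv_def power2_eq_square algebra_simps)
  have "((\<lambda>t. (t\<^sup>2 - 1) * rodrigues_deriv N 1 t - 2 * real N * t * rodrigues_deriv N 0 t)
      has_real_derivative 2 * t * rodrigues_deriv N 1 t + (t\<^sup>2 - 1) * rodrigues_deriv N 2 t
        - 2 * real N * rodrigues_deriv N 0 t - 2 * real N * t * rodrigues_deriv N 1 t) (at t)"
    by (auto intro!: derivative_eq_intros DERIV_rodrigues_deriv simp: numeral_2_eq_2)
  from vanishing_DERIV_eq_0[OF ode this] show ?case
    by (simp add: algebra_simps numeral_2_eq_2)
next
  case (Suc k)
  have "((\<lambda>t. (t\<^sup>2 - 1) * rodrigues_deriv N (k + 2) t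
       + 2 * (real k + 1 - real N) * t * rodrigues_deriv N (k + 1) t
       + (real k + 1) * (real k - 2 * real N) * rodrigues_deriv N k t)
      has_real_derivative 2 * t * rodrigues_deriv N (k + 2) t + (t\<^sup>2 - 1) * rodrigues_deriv N (k + 3) t
        + 2 * (real k + 1 - real N) * rodrigues_deriv N (k + 1) t
        + 2 * (real k + 1 - real N) * t * rodrigues_deriv N (k + 2) t
        + (real k + 1) * (real k - 2 * real N) * rodrigues_deriv N (k + 1) t) (at t)"
    by (auto intro!: derivative_eq_intros DERIV_rodrigues_deriv simp: numeral_2_eq_2 numeral_3_eq_3)
  from vanishing_DERIV_eq_0[OF Suc.IH this] show ?case
    by (simp add: algebra_simps numeral_3_eq_3)
qed

lemma legendre_deriv_eq_rodrigues_deriv: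
  "legendre_deriv N l t = rodrigues_deriv N (l + N) t / (2 ^ N * fact N)"
  unfolding legendre_deriv_def rodrigues_deriv_def legendre_def
  by (simp add: higher_pderiv_smult funpow_add)

lemma legendre_deriv_ode:
  "(1 - t\<^sup>2) * legendre_deriv N (l + 2) t - 2 * (real l + 1) * t * legendre_deriv N (l + 1) t
     + (real N - real l) * (real N + real l + 1) * legendre_deriv N l t = 0"
proof -
  define K :: real where "K = 2 ^ N * fact N"
  have R: "rodrigues_deriv N (l + N + j) t = K * legendre_deriv N (l + j) t" for j
    unfolding legendre_deriv_eq_rodrigues_deriv K_def by (simp add: ac_simps)
  have "K * ((1 - t\<^sup>2) * legendre_deriv N (l + 2) t - 2 * (real l + 1) * t * legendre_deriv N (l + 1) t
      + (real N - real l) * (real N + real l + 1) * legendre_deriv N l t)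
    = - ((t\<^sup>2 - 1) * rodrigues_deriv N (l + N + 2) t
      + 2 * (real (l + N) + 1 - real N) * t * rodrigues_deriv N (l + N + 1) t
      + (real (l + N) + 1) * (real (l + N) - 2 * real N) * rodrigues_deriv N (l + N) t)"
    using R[of 0] R[of 1] R[of 2] by (simp add: algebra_simps)
  also have "\<dots> = 0"
    using rodrigues_deriv_ode[of t N "l + N"] by (simp add: add.assoc)
  finally show ?thesis
    by (simp add: K_def)
qed

lemma higher_pderiv_eq_0:
  assumes "degree p < m"
  shows "(pderiv ^^ m) p = 0"
  using assms by (intro poly_eqI) (simp add: coeff_higher_pderiv coeff_eq_0)

lemma legendre_deriv_eq_0:
  assumes "N < l"
  shows "legendre_deriv N l t = 0"
proof -
  have "degree ([:-1, 0, 1 :: real:] ^ N) < l + N"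
    using degree_power_le[of "[:-1, 0, 1 :: real:]" N] assms by simp
  then show ?thesis
    by (simp add: legendre_deriv_eq_rodrigues_deriv rodrigues_deriv_def higher_pderiv_eq_0)
qed

lemma DERIV_legendre_deriv [derivative_intros]:
  "(f has_real_derivative f') (at x) \<Longrightarrow>
    ((\<lambda>x. legendre_deriv N l (f x)) has_real_derivative f' * legendre_deriv N (Suc l) (f x)) (at x)"
  unfolding legendre_deriv_def by (auto intro!: derivative_eq_intros)


lemma Complex_power_Suc_Suc:
  "Complex u v ^ Suc (Suc l) = 2 * u * Complex u v ^ Suc l - (u\<^sup>2 + v\<^sup>2) * Complex u v ^ l"
  by (simp add: complex_eq_iff power2_eq_square algebra_simps)

lemma chebT_homogeneous:
  assumes "\<rho> > 0" and "\<rho>\<^sup>2 = u\<^sup>2 + v\<^sup>2"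
  shows "\<rho> ^ l * chebT l (u / \<rho>) = Re (Complex u v ^ l)"
proof (induction l rule: induct_nat_012)
  case (ge2 k)
  have "\<rho> ^ Suc (Suc k) * chebT (Suc (Suc k)) (u / \<rho>)
      = 2 * u * (\<rho> ^ Suc k * chebT (Suc k) (u / \<rho>)) - \<rho>\<^sup>2 * (\<rho> ^ k * chebT k (u / \<rho>))"
    using assms(1) by (simp add: field_simps power2_eq_square)
  then show ?case
    using ge2 assms(2) by (simp only: Complex_power_Suc_Suc) simp
qed (use assms in simp_all)

lemma chebU_homogeneous:
  assumes "\<rho> > 0" and "\<rho>\<^sup>2 = u\<^sup>2 + v\<^sup>2"
  shows "\<rho> ^ Suc l * (v / \<rho>) * chebU l (u / \<rho>) = Im (Complex u v ^ Suc l)"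
proof (induction l rule: induct_nat_012)
  case (ge2 k)
  have "\<rho> ^ Suc (Suc (Suc k)) * (v / \<rho>) * chebU (Suc (Suc k)) (u / \<rho>)
      = 2 * u * (\<rho> ^ Suc (Suc k) * (v / \<rho>) * chebU (Suc k) (u / \<rho>))
        - \<rho>\<^sup>2 * (\<rho> ^ Suc k * (v / \<rho>) * chebU k (u / \<rho>))"
    using assms(1) by (simp add: field_simps power2_eq_square)
  then show ?case
    using ge2 assms(2) by (simp only: Complex_power_Suc_Suc) simp
qed (use assms(1) in \<open>simp_all add: field_simps power2_eq_square\<close>)

lemma has_vector_derivative_Complex_power:
  "((\<lambda>t. Complex t v ^ l) has_vector_derivative of_nat l * Complex u v ^ (l - 1)) (at u)"
  "((\<lambda>t. Complex u t ^ l) has_vector_derivative \<i> * of_nat l * Complex u v ^ (l - 1)) (at v)"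
proof -
  have "Complex t v = of_real t + \<i> * of_real v" "Complex u t = of_real u + \<i> * of_real t" for t
    by (simp_all add: complex_eq_iff)
  then show "((\<lambda>t. Complex t v ^ l) has_vector_derivative of_nat l * Complex u v ^ (l - 1)) (at u)"
    "((\<lambda>t. Complex u t ^ l) has_vector_derivative \<i> * of_nat l * Complex u v ^ (l - 1)) (at v)"
    by (auto intro!: has_vector_derivative_real_field derivative_eq_intros)
qed

lemma DERIV_Re_Complex_power:
  "((\<lambda>t. Re (Complex t v ^ l)) has_real_derivative real l * Re (Complex u v ^ (l - 1))) (at u)"
  "((\<lambda>t. Re (Complex u t ^ l)) has_real_derivative - real l * Im (Complex u v ^ (l - 1))) (at v)"
  using has_field_derivative_Re[OF has_vector_derivative_Complex_power(1)]
    has_field_derivative_Re[OF has_vector_derivative_Complex_power(2)] by simp_all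

lemma DERIV_Im_Complex_power:
  "((\<lambda>t. Im (Complex t v ^ l)) has_real_derivative real l * Im (Complex u v ^ (l - 1))) (at u)"
  "((\<lambda>t. Im (Complex u t ^ l)) has_real_derivative real l * Re (Complex u v ^ (l - 1))) (at v)"
  using has_field_derivative_Im[OF has_vector_derivative_Complex_power(1)]
    has_field_derivative_Im[OF has_vector_derivative_Complex_power(2)] by simp_all


section \<open>Solid harmonics\<close>

definition legendre_solid :: "nat \<Rightarrow> nat \<Rightarrow> real \<Rightarrow> real \<Rightarrow> real \<Rightarrow> real" where
  "legendre_solid N l a b c =
     (let r = sph_r (a, b, c) in r powi (int N - int l) * legendre_deriv N l (a / r))"

definition legendre_solid_d0 :: "nat \<Rightarrow> nat \<Rightarrow> real \<Rightarrow> real \<Rightarrow> real \<Rightarrow> real" where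
  "legendre_solid_d0 N l a b c = (let r = sph_r (a, b, c); t = a / r in
     r powi (int N - int l - 1)
       * ((real N - real l) * t * legendre_deriv N l t + (1 - t\<^sup>2) * legendre_deriv N (Suc l) t))"

definition legendre_solid_dr :: "nat \<Rightarrow> nat \<Rightarrow> real \<Rightarrow> real \<Rightarrow> real \<Rightarrow> real" where
  "legendre_solid_dr N l a b c = (let r = sph_r (a, b, c); t = a / r in
     r powi (int N - int l - 2)
       * ((real N - real l) * legendre_deriv N l t - t * legendre_deriv N (Suc l) t))"

lemma sph_r_eq: "sph_r (a, b, c) = sqrt (a\<^sup>2 + b\<^sup>2 + c\<^sup>2)"
  by (simp add: sph_r_def)

lemma sph_r_pos: "b\<^sup>2 + c\<^sup>2 > 0 \<Longrightarrow> sph_r (a, b, c) > 0"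
  unfolding sph_r_eq by (simp add: add.assoc add_nonneg_pos)

lemma DERIV_sqrt_add_square:
  "k + x\<^sup>2 > 0 \<Longrightarrow> ((\<lambda>t. sqrt (k + t\<^sup>2)) has_real_derivative x / sqrt (k + x\<^sup>2)) (at x)"
  by (auto intro!: derivative_eq_intros simp: field_simps)

lemma DERIV_legendre_solid_chain:
  assumes "(r has_real_derivative r') (at s)" and "(p has_real_derivative p') (at s)" and "r s > 0"
  shows "((\<lambda>s. r s powi k * legendre_deriv N l (p s / r s)) has_real_derivative
     r s powi k * (of_int k * r' / r s * legendre_deriv N l (p s / r s)
       + (p' * r s - p s * r') / (r s)\<^sup>2 * legendre_deriv N (Suc l) (p s / r s))) (at s)"
proof -
  have "((\<lambda>s. p s / r s) has_real_derivative (p' * r s - p s * r') / (r s)\<^sup>2) (at s)"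
    using DERIV_divide[OF assms(2,1)] assms(3) by (simp add: power2_eq_square)
  moreover have "((\<lambda>s. r s powi k) has_real_derivative of_int k * r s powi (k - 1) * r') (at s)"
    using assms(1,3) by (auto intro!: derivative_eq_intros)
  ultimately have "((\<lambda>s. r s powi k * legendre_deriv N l (p s / r s)) has_real_derivative
     of_int k * r s powi (k - 1) * r' * legendre_deriv N l (p s / r s)
       + (p' * r s - p s * r') / (r s)\<^sup>2 * legendre_deriv N (Suc l) (p s / r s) * r s powi k) (at s)"
    by (intro DERIV_mult DERIV_legendre_deriv)
  then show ?thesis
    using assms(3) by (elim DERIV_cong) (simp add: power_int_diff field_simps)
qed

lemma DERIV_legendre_solid_x0:
  assumes "sph_r (a, b, c) > 0"
  shows "((\<lambda>t. legendre_solid N l t b c) has_real_derivative legendre_solid_d0 N l a b c) (at a)"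
proof -
  define r where "r = sph_r (a, b, c)"
  have r: "r \<noteq> 0" "r powi (int N - int l - 1) = r powi (int N - int l) / r"
    using assms by (simp_all add: r_def power_int_diff)
  have "((\<lambda>t. sph_r (t, b, c)) has_real_derivative a / r) (at a)"
    using DERIV_sqrt_add_square[of "b\<^sup>2 + c\<^sup>2" a] assms by (simp add: r_def sph_r_eq ac_simps)
  from DERIV_legendre_solid_chain[OF this DERIV_ident assms, where k="int N - int l" and N=N and l=l]
  show ?thesis
    unfolding legendre_solid_def legendre_solid_d0_def Let_def r_def[symmetric] r(2)
    using r(1) by (elim DERIV_cong) (simp add: field_simps power2_eq_square)
qed

lemma DERIV_legendre_solid_x1:
  assumes "sph_r (a, b, c) > 0"
  shows "((\<lambda>t. legendre_solid N l a t c) has_real_derivative b * legendre_solid_dr N l a b c) (at b)"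
proof -
  define r where "r = sph_r (a, b, c)"
  have r: "r \<noteq> 0" "r powi (int N - int l - 2) = r powi (int N - int l) / r\<^sup>2"
    using assms by (simp_all add: r_def power_int_diff)
  have "((\<lambda>t. sph_r (a, t, c)) has_real_derivative b / r) (at b)"
    using DERIV_sqrt_add_square[of "a\<^sup>2 + c\<^sup>2" b] assms by (simp add: r_def sph_r_eq ac_simps)
  from DERIV_legendre_solid_chain[OF this DERIV_const[of a] assms, where k="int N - int l" and N=N and l=l]
  show ?thesis
    unfolding legendre_solid_def legendre_solid_dr_def Let_def r_def[symmetric] r(2)
    using r(1) by (elim DERIV_cong) (simp add: field_simps power2_eq_square)
qed

lemma DERIV_legendre_solid_x2:
  assumes "sph_r (a, b, c) > 0"
  shows "((\<lambda>t. legendre_solid N l a b t) has_real_derivative c * legendre_solid_dr N l a b c) (at c)"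
proof -
  have swap: "sph_r (a, b, t) = sph_r (a, t, b)" for t
    by (simp add: sph_r_eq ac_simps)
  show ?thesis
    using DERIV_legendre_solid_x1[of a c b N l] assms
    by (simp add: swap legendre_solid_def legendre_solid_dr_def)
qed

lemma legendre_solid_d0_Suc:
  "legendre_solid_d0 N (Suc l) a b c = - (real N + real l + 1) * legendre_solid_dr N l a b c"
proof -
  define t where "t = a / sph_r (a, b, c)"
  define P where "P j = legendre_deriv N (l + j) t" for j
  have "(1 - t\<^sup>2) * P 2 - 2 * (real l + 1) * t * P 1 + (real N - real l) * (real N + real l + 1) * P 0 = 0"
    using legendre_deriv_ode[of t N l] by (simp add: P_def)
  then have "(real N - real (Suc l)) * t * P 1 + (1 - t\<^sup>2) * P 2
      = - (real N + real l + 1) * ((real N - real l) * P 0 - t * P 1)"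
    by (simp add: algebra_simps)
  moreover have "int N - int (Suc l) - 1 = int N - int l - 2"
    by simp
  ultimately show ?thesis
    unfolding legendre_solid_d0_def legendre_solid_dr_def Let_def t_def[symmetric]
    by (simp add: P_def numeral_2_eq_2)
qed

lemma legendre_solid_dr_Suc:
  assumes "sph_r (a, b, c) > 0"
  shows "(b\<^sup>2 + c\<^sup>2) * legendre_solid_dr N (Suc l) a b c + 2 * (real l + 1) * legendre_solid N (Suc l) a b c
       = (real N + real l + 1) * legendre_solid_d0 N l a b c"
proof -
  define r where "r = sph_r (a, b, c)"
  define t where "t = a / r"
  define P where "P j = legendre_deriv N (l + j) t" for j
  have r: "r \<noteq> 0" "b\<^sup>2 + c\<^sup>2 = r\<^sup>2 * (1 - t\<^sup>2)"
    using assms by (auto simp: r_def t_def sph_r_eq power_divide field_simps)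
  have "int N - int (Suc l) - 2 = (int N - int l - 1) - 2"
    by simp
  then have e: "r powi (int N - int (Suc l) - 2) = r powi (int N - int l - 1) / r\<^sup>2"
    "r powi (int N - int (Suc l)) = r powi (int N - int l - 1)"
    using power_int_diff[of r "int N - int l - 1" 2] r(1) by (simp, simp add: algebra_simps)
  have "(b\<^sup>2 + c\<^sup>2) * legendre_solid_dr N (Suc l) a b c + 2 * (real l + 1) * legendre_solid N (Suc l) a b c
     = r powi (int N - int l - 1)
       * ((1 - t\<^sup>2) * ((real N - real (Suc l)) * P 1 - t * P 2) + 2 * (real l + 1) * P 1)"
    unfolding legendre_solid_def legendre_solid_dr_def Let_def r_def[symmetric] t_def[symmetric] r(2) e
    using r(1) by (simp add: P_def numeral_2_eq_2 field_simps)
  also have "(1 - t\<^sup>2) * ((real N - real (Suc l)) * P 1 - t * P 2) + 2 * (real l + 1) * P 1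
     = (real N + real l + 1) * ((real N - real l) * t * P 0 + (1 - t\<^sup>2) * P 1)
       - t * ((1 - t\<^sup>2) * P 2 - 2 * (real l + 1) * t * P 1 + (real N - real l) * (real N + real l + 1) * P 0)"
    by (simp add: algebra_simps power2_eq_square)
  also have "(1 - t\<^sup>2) * P 2 - 2 * (real l + 1) * t * P 1 + (real N - real l) * (real N + real l + 1) * P 0 = 0"
    using legendre_deriv_ode[of t N l] by (simp add: P_def)
  finally show ?thesis
    unfolding legendre_solid_d0_def Let_def r_def[symmetric] t_def[symmetric]
    by (simp add: P_def)
qed

lemma legendre_deriv_degree_1:
  "legendre_deriv 1 0 t = t" "legendre_deriv 1 1 t = 1" "legendre_deriv 1 2 t = 0"
proof -
  have "legendre 1 = [:0, 1:]"
    by (simp add: legendre_def pderiv_pCons)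
  then show "legendre_deriv 1 0 t = t" "legendre_deriv 1 1 t = 1"
    by (simp_all add: legendre_deriv_def pderiv_pCons)
  show "legendre_deriv 1 2 t = 0"
    by (simp add: legendre_deriv_eq_0)
qed

lemma legendre_solid_degree_1:
  "legendre_solid_d0 1 0 a b c = 1" "legendre_solid_dr 1 0 a b c = 0"
  "legendre_solid 1 1 a b c = 1" "legendre_solid_d0 1 1 a b c = 0" "legendre_solid_dr 1 1 a b c = 0"
  by (simp_all add: legendre_solid_def legendre_solid_d0_def legendre_solid_dr_def Let_def
      legendre_deriv_degree_1[unfolded One_nat_def numeral_2_eq_2] power2_eq_square)

lemma sin_th1_eq:
  assumes "b\<^sup>2 + c\<^sup>2 > 0"
  shows "sqrt (1 - (a / sph_r (a, b, c))\<^sup>2) = sph_rho (a, b, c) / sph_r (a, b, c)"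
proof -
  have "1 - (a / sph_r (a, b, c))\<^sup>2 = (b\<^sup>2 + c\<^sup>2) / (sph_r (a, b, c))\<^sup>2"
    using sph_r_pos[OF assms, of a] by (simp add: sph_r_eq power_divide field_simps)
  then show ?thesis
    using sph_r_pos[OF assms, of a] by (simp add: sph_rho_def real_sqrt_divide)
qed

lemma sph_r_power_harmU:
  assumes "b\<^sup>2 + c\<^sup>2 > 0"
  shows "sph_r (a, b, c) ^ N * harmU l N (a, b, c) = legendre_solid N l a b c * Re (Complex b c ^ l)"
proof -
  define r \<rho> where "r = sph_r (a, b, c)" and "\<rho> = sph_rho (a, b, c)"
  have pos: "r > 0" "\<rho> > 0" and \<rho>: "\<rho>\<^sup>2 = b\<^sup>2 + c\<^sup>2"
    using assms sph_r_pos[OF assms] by (simp_all add: r_def \<rho>_def sph_rho_def)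
  have "sph_r (a, b, c) ^ N * harmU l N (a, b, c)
      = r ^ N * ((\<rho> / r) ^ l * legendre_deriv N l (a / r) * chebT l (b / \<rho>))"
    by (simp add: harmU_def assoc_legendre_def sin_th1_eq[OF assms] legendre_deriv_def r_def \<rho>_def
        cos_th1_def cos_th2_def)
  also have "\<dots> = r powi (int N - int l) * legendre_deriv N l (a / r) * (\<rho> ^ l * chebT l (b / \<rho>))"
    using pos by (simp add: power_int_diff power_divide)
  finally show ?thesis
    using chebT_homogeneous[OF pos(2) \<rho>] by (simp add: legendre_solid_def Let_def r_def)
qed

lemma sph_r_power_harmV:
  assumes "b\<^sup>2 + c\<^sup>2 > 0"
  shows "sph_r (a, b, c) ^ N * harmV (Suc l) N (a, b, c)
    = legendre_solid N (Suc l) a b c * Im (Complex b c ^ Suc l)"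
proof -
  define r \<rho> where "r = sph_r (a, b, c)" and "\<rho> = sph_rho (a, b, c)"
  have pos: "r > 0" "\<rho> > 0" and \<rho>: "\<rho>\<^sup>2 = b\<^sup>2 + c\<^sup>2"
    using assms sph_r_pos[OF assms] by (simp_all add: r_def \<rho>_def sph_rho_def)
  have "sph_r (a, b, c) ^ N * harmV (Suc l) N (a, b, c)
      = r ^ N * ((\<rho> / r) ^ Suc l * legendre_deriv N (Suc l) (a / r) * (c / \<rho>) * chebU l (b / \<rho>))"
    by (simp add: harmV_def assoc_legendre_def sin_th1_eq[OF assms] legendre_deriv_def r_def \<rho>_def
        cos_th1_def cos_th2_def sin_th2_def)
  also have "\<dots> = r powi (int N - int (Suc l)) * legendre_deriv N (Suc l) (a / r)
      * (\<rho> ^ Suc l * (c / \<rho>) * chebU l (b / \<rho>))"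
    using pos by (simp add: power_int_diff power_divide del: of_nat_Suc)
  finally show ?thesis
    using chebU_homogeneous[OF pos(2) \<rho>] by (simp add: legendre_solid_def Let_def r_def)
qed


lemmas quat_defs = times_quat_def plus_quat_def minus_quat_def uminus_quat_def zero_quat_def
  qreal_def e1_def e2_def

lemma Dbar_eq_Quat: "Dbar f x = Quat (pd0 f x) (- pd1 f x) (- pd2 f x) 0"
  by (simp add: Dbar_def quat_defs)

lemma Dbar_legendre_solid_mult:
  assumes "b\<^sup>2 + c\<^sup>2 > 0"
    and f: "\<And>a b c. b\<^sup>2 + c\<^sup>2 > 0 \<Longrightarrow> f (a, b, c) = legendre_solid N l a b c * g b c"
    and g1: "((\<lambda>t. g t c) has_real_derivative g1) (at b)"
    and g2: "((\<lambda>t. g b t) has_real_derivative g2) (at c)"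
  shows "Dbar f (a, b, c) = Quat (legendre_solid_d0 N l a b c * g b c)
      (- (b * legendre_solid_dr N l a b c * g b c + g1 * legendre_solid N l a b c))
      (- (c * legendre_solid_dr N l a b c * g b c + g2 * legendre_solid N l a b c)) 0"
proof -
  have r: "sph_r (a, b, c) > 0"
    using sph_r_pos[OF assms(1)] .
  have "((\<lambda>t. f (t, b, c)) has_real_derivative legendre_solid_d0 N l a b c * g b c) (at a)"
    using DERIV_cmult_right[OF DERIV_legendre_solid_x0[OF r]] assms(1) by (simp add: f)
  moreover have "((\<lambda>t. f (a, t, c)) has_real_derivative
      b * legendre_solid_dr N l a b c * g b c + g1 * legendre_solid N l a b c) (at b)"
  proof (rule has_field_derivative_transform_within_open)
    show "((\<lambda>t. legendre_solid N l a t c * g t c) has_real_derivative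
      b * legendre_solid_dr N l a b c * g b c + g1 * legendre_solid N l a b c) (at b)"
      using DERIV_mult[OF DERIV_legendre_solid_x1[OF r] g1] by (simp add: algebra_simps)
    show "open {t. t\<^sup>2 + c\<^sup>2 > 0}"
      by (intro open_Collect_less) (auto intro!: continuous_intros)
  qed (use assms(1) f in auto)
  moreover have "((\<lambda>t. f (a, b, t)) has_real_derivative
      c * legendre_solid_dr N l a b c * g b c + g2 * legendre_solid N l a b c) (at c)"
  proof (rule has_field_derivative_transform_within_open)
    show "((\<lambda>t. legendre_solid N l a b t * g b t) has_real_derivative
      c * legendre_solid_dr N l a b c * g b c + g2 * legendre_solid N l a b c) (at c)"
      using DERIV_mult[OF DERIV_legendre_solid_x2[OF r] g2] by (simp add: algebra_simps)
    show "open {t. b\<^sup>2 + t\<^sup>2 > 0}"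
      by (intro open_Collect_less) (auto intro!: continuous_intros)
  qed (use assms(1) f in auto)
  ultimately show ?thesis
    by (simp add: Dbar_eq_Quat pd0_def pd1_def pd2_def DERIV_imp_deriv)
qed

lemma legendre_solid_eq_0:
  assumes "N < l"
  shows "legendre_solid N l a b c = 0" "legendre_solid_d0 N l a b c = 0" "legendre_solid_dr N l a b c = 0"
  using assms
  by (simp_all add: legendre_solid_def legendre_solid_d0_def legendre_solid_dr_def legendre_deriv_eq_0)

text \<open>For l = n + 2 both sides vanish: X^(n+2) by convention, the right-hand side because
  P_(n+1)^(n+2) = 0.\<close>

lemma Xc_eq:
  assumes "b\<^sup>2 + c\<^sup>2 > 0" and "l \<le> n + 2"
  shows "Xc l n (a, b, c) = Quat
     (legendre_solid_d0 (n + 1) l a b c * Re (Complex b c ^ l) / 2)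
     (- (b * legendre_solid_dr (n + 1) l a b c * Re (Complex b c ^ l)
         + real l * Re (Complex b c ^ (l - 1)) * legendre_solid (n + 1) l a b c) / 2)
     (- (c * legendre_solid_dr (n + 1) l a b c * Re (Complex b c ^ l)
         - real l * Im (Complex b c ^ (l - 1)) * legendre_solid (n + 1) l a b c) / 2) 0"
proof (cases "l \<le> n + 1")
  case True
  have "Dbar (\<lambda>y. sph_r y ^ (n + 1) * harmU l (n + 1) y) (a, b, c) = Quat
     (legendre_solid_d0 (n + 1) l a b c * Re (Complex b c ^ l))
     (- (b * legendre_solid_dr (n + 1) l a b c * Re (Complex b c ^ l)
         + real l * Re (Complex b c ^ (l - 1)) * legendre_solid (n + 1) l a b c))
     (- (c * legendre_solid_dr (n + 1) l a b c * Re (Complex b c ^ l)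
         + - real l * Im (Complex b c ^ (l - 1)) * legendre_solid (n + 1) l a b c)) 0"
    by (rule Dbar_legendre_solid_mult[OF assms(1) sph_r_power_harmU DERIV_Re_Complex_power])
  with True show ?thesis
    by (simp add: Xc_def Xdag_def quat_defs)
next
  case False
  with assms(2) show ?thesis
    by (simp add: Xc_def legendre_solid_eq_0 zero_quat_def)
qed

lemma Yc_eq:
  assumes "b\<^sup>2 + c\<^sup>2 > 0" and "l \<le> n + 2"
  shows "Yc l n (a, b, c) = Quat
     (legendre_solid_d0 (n + 1) l a b c * Im (Complex b c ^ l) / 2)
     (- (b * legendre_solid_dr (n + 1) l a b c * Im (Complex b c ^ l)
         + real l * Im (Complex b c ^ (l - 1)) * legendre_solid (n + 1) l a b c) / 2)
     (- (c * legendre_solid_dr (n + 1) l a b c * Im (Complex b c ^ l)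
         + real l * Re (Complex b c ^ (l - 1)) * legendre_solid (n + 1) l a b c) / 2) 0"
proof (cases "1 \<le> l \<and> l \<le> n + 1")
  case True
  then obtain k where k: "l = Suc k"
    by (cases l) auto
  have "Dbar (\<lambda>y. sph_r y ^ (n + 1) * harmV (Suc k) (n + 1) y) (a, b, c) = Quat
     (legendre_solid_d0 (n + 1) (Suc k) a b c * Im (Complex b c ^ Suc k))
     (- (b * legendre_solid_dr (n + 1) (Suc k) a b c * Im (Complex b c ^ Suc k)
         + real (Suc k) * Im (Complex b c ^ (Suc k - 1)) * legendre_solid (n + 1) (Suc k) a b c))
     (- (c * legendre_solid_dr (n + 1) (Suc k) a b c * Im (Complex b c ^ Suc k)
         + real (Suc k) * Re (Complex b c ^ (Suc k - 1)) * legendre_solid (n + 1) (Suc k) a b c)) 0"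
    by (rule Dbar_legendre_solid_mult[OF assms(1) sph_r_power_harmV DERIV_Im_Complex_power])
  with True show ?thesis
    by (simp add: Yc_def Ydag_def k quat_defs)
next
  case False
  with assms(2) have "l = 0 \<or> n + 1 < l"
    by auto
  then show ?thesis
    by (auto simp: Yc_def legendre_solid_eq_0 zero_quat_def)
qed

definition e3 :: quat where "e3 = Quat 0 0 0 1"

lemma Xc_Yc_ladder:
  assumes "sph_rho x > 0" and "l \<le> n + 1"
  shows "Xc (Suc l) n x + Yc (Suc l) n x * e3
       = qreal (- (real n + real (Suc l) + 1)) * ((Xc l n x - Yc l n x * e3) * e1)"
proof -
  obtain a b c where x: "x = (a, b, c)"
    by (cases x) auto
  have bc: "b\<^sup>2 + c\<^sup>2 > 0"
    using assms(1) by (simp add: x sph_rho_def)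
  define A B W where "A j = legendre_solid_d0 (n + 1) j a b c"
    and "B j = legendre_solid_dr (n + 1) j a b c" and "W j = legendre_solid (n + 1) j a b c" for j
  have d0: "A (Suc l) = - (real n + real l + 2) * B l"
    using legendre_solid_d0_Suc by (simp add: A_def B_def)
  have dr: "(b\<^sup>2 + c\<^sup>2) * B (Suc l) + 2 * (real l + 1) * W (Suc l) = (real n + real l + 2) * A l"
    using legendre_solid_dr_Suc[OF sph_r_pos[OF bc], of "n + 1" l] by (simp add: A_def B_def W_def)
  have le: "l \<le> n + 2" "Suc l \<le> n + 2"
    using assms(2) by simp_all
  show ?thesis
    unfolding x Xc_eq[OF bc le(1)] Yc_eq[OF bc le(1)] Xc_eq[OF bc le(2)] Yc_eq[OF bc le(2)]
      A_def[symmetric] B_def[symmetric] W_def[symmetric]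
    using dr by (simp add: quat_defs e3_def d0 field_simps) (intro conjI; algebra)
qed

lemma Xc_Yc_degree_0:
  assumes "sph_rho x > 0"
  shows "Xc 0 0 x = qreal (1/2) \<and> Xc 1 0 x * e1 = qreal (1/2) \<and> Yc 1 0 x * e2 = qreal (1/2)"
proof -
  obtain a b c where x: "x = (a, b, c)"
    by (cases x) auto
  have bc: "b\<^sup>2 + c\<^sup>2 > 0"
    using assms by (simp add: x sph_rho_def)
  show ?thesis
    using legendre_solid_degree_1 by (simp add: x Xc_eq[OF bc] Yc_eq[OF bc] quat_defs)
qed


section \<open>From the ladder relation to the recurrences\<close>

lemma quat_mult_e1_e2:
  "X * e1 - Y * e2 = (X - Y * e3) * e1" "Y * e1 + X * e2 = (X - Y * e3) * e2"
  "X * e1 + Y * e2 = (X + Y * e3) * e1" "Y * e1 - X * e2 = - ((X + Y * e3) * e2)"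
  by (simp_all add: quat_defs e3_def)

lemma qreal_mult_assoc: "qreal a * p * q = qreal a * (p * q)"
  by (simp add: quat_defs algebra_simps)

lemma qreal_mult_qreal: "qreal a * (qreal b * q) = qreal (a * b) * q"
  by (simp add: quat_defs algebra_simps)

lemma uminus_qreal_mult: "- (qreal a * q) = qreal (- a) * q"
  by (simp add: quat_defs)

lemma ladder_imp_recurrence:
  assumes "X1 + Y1 * e3 = qreal (- \<mu>) * ((X0 - Y0 * e3) * e1)"
    and "X2 + Y2 * e3 = qreal (- \<nu>) * ((X1 - Y1 * e3) * e1)"
    and "\<nu> \<noteq> 0"
  shows "X1 = qreal (- \<mu> / 2) * (X0 * e1 - Y0 * e2) + qreal (1 / (2 * \<nu>)) * (X2 * e1 + Y2 * e2)
    \<and> Y1 = qreal (- \<mu> / 2) * (Y0 * e1 + X0 * e2) + qreal (1 / (2 * \<nu>)) * (Y2 * e1 - X2 * e2)"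
proof -
  have \<nu>: "1 / (2 * \<nu>) * - \<nu> = - 1 / 2" "1 / (2 * \<nu>) * \<nu> = 1 / 2"
    using assms(3) by simp_all
  show ?thesis
    unfolding quat_mult_e1_e2(1,2)[where X=X0 and Y=Y0] quat_mult_e1_e2(3,4)[where X=X2 and Y=Y2] assms(2)
      qreal_mult_assoc uminus_qreal_mult minus_minus qreal_mult_qreal \<nu>
    using assms(1) by (intro conjI quat.expand; simp add: quat_defs e3_def field_simps)
qed

lemma ladder_imp_recurrence_0:
  assumes "X1 + Y1 * e3 = qreal (- \<nu>) * ((X0 - Y0 * e3) * e1)" and "Y0 = 0" and "\<nu> \<noteq> 0"
  shows "X0 = qreal (1 / \<nu>) * (X1 * e1 + Y1 * e2)"
  unfolding quat_mult_e1_e2(3)[where X=X1 and Y=Y1] assms(1) qreal_mult_assoc qreal_mult_qreal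
  using assms(2,3) by (intro quat.expand; simp add: quat_defs e3_def)

theorem proposition2:
  fixes n :: nat and x :: pt
  assumes "sph_rho x > 0"
  shows "Xc 0 n x = qreal (1 / (real n + 2)) * (Xc 1 n x * e1 + Yc 1 n x * e2)
    \<and> (\<forall>m\<in>{1..n+1}.
         Xc m n x = qreal (- (real n + real m + 1) / 2) * (Xc (m-1) n x * e1 - Yc (m-1) n x * e2)
                    + qreal (1 / (2 * (real n + real m + 2))) * (Xc (m+1) n x * e1 + Yc (m+1) n x * e2)
       \<and> Yc m n x = qreal (- (real n + real m + 1) / 2) * (Yc (m-1) n x * e1 + Xc (m-1) n x * e2)
                    + qreal (1 / (2 * (real n + real m + 2))) * (Yc (m+1) n x * e1 - Xc (m+1) n x * e2))
    \<and> Xc 0 0 x = qreal (1/2) \<and> Xc 1 0 x * e1 = qreal (1/2) \<and> Yc 1 0 x * e2 = qreal (1/2)"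
proof (intro conjI ballI)
  note ladder = Xc_Yc_ladder[OF assms]
  show "Xc 0 n x = qreal (1 / (real n + 2)) * (Xc 1 n x * e1 + Yc 1 n x * e2)"
    using ladder_imp_recurrence_0[OF ladder[of 0]] by (simp add: Yc_def add.commute)
  fix m
  assume "m \<in> {1..n+1}"
  then obtain k where m: "m = Suc k" and k: "k \<le> n"
    by (cases m) auto
  have \<nu>: "real n + real (Suc (Suc k)) + 1 = real n + real m + 2"
    using m by simp
  from ladder_imp_recurrence[OF ladder[of k] ladder[of "Suc k"]] k
  show "Xc m n x = qreal (- (real n + real m + 1) / 2) * (Xc (m-1) n x * e1 - Yc (m-1) n x * e2)
        + qreal (1 / (2 * (real n + real m + 2))) * (Xc (m+1) n x * e1 + Yc (m+1) n x * e2)"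
    and "Yc m n x = qreal (- (real n + real m + 1) / 2) * (Yc (m-1) n x * e1 + Xc (m-1) n x * e2)
        + qreal (1 / (2 * (real n + real m + 2))) * (Yc (m+1) n x * e1 - Xc (m+1) n x * e2)"
    unfolding \<nu> by (simp_all add: m)
qed (use Xc_Yc_degree_0[OF assms] in simp_all)

end
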